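(* Let $X,Y$ be metric spaces and equip $X\times Y$ with the maximum metric. Then (i) $\dim_{\mathrm P}(X\times Y)\ge \dim_{\mathrm P}X+\vec{\dim}_{\mathrm P}Y$; (ii) $\vec{\dim}_{\mathrm P}(X\times Y)\ge \vec{\dim}_{\mathrm P}X+\vec{\dim}_{\mathrm P}Y$; (iii) $\underline{\dim}_{\mathrm P}(X\times Y)\ge \underline{\dim}_{\mathrm P}X+\underline{\dim}_{\mathrm P}Y$.
   Context: For a subset $E$ of a metric space and $\delta>0$, $N_\delta(E)$ is the minimal cardinality of a cover of $E$ by sets of diameter at most $\delta$. The lower and upper box dimensions of a nonempty set $E$ are $\underline{\dim}_{\mathrm B}E=\liminf_{\delta\to0}\frac{\log N_\delta(E)}{|\log\delta|}$ and $\overline{\dim}_{\mathrm B}E=\limsup_{\delta\to0}\frac{\log N_\delta(E)}{|\log\delta|}$. The (upper) packing dimension is $\dim_{\mathrm P}E=\inf\{\sup_n\overline{\dim}_{\mathrm B}E_n: E\subseteq\bigcup_n E_n\}$, the lower packing dimension is $\underline{\dim}_{\mathrm P}E=\inf\{\sup_n\underline{\dim}_{\mathrm B}E_n: E\subseteq\bigcup_nE_n\}$ (infima over countable covers), and the directed lower packing dimension is $\vec{\dim}_{\mathrm P}E=\inf\{\sup_n\underline{\dim}_{\mathrm B}E_n: E_n\uparrow E\}$, where $E_n\uparrow E$ means that $(E_n)_{n\in\mathbb N}$ is an increasing sequence of sets with union $E$. *)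

theory Defs
  imports "HOL-Analysis.Analysis"
begin

definition mdiam :: "('a \<Rightarrow> 'a \<Rightarrow> real) \<Rightarrow> 'a set \<Rightarrow> ereal" where
  "mdiam d A = Sup {ereal (d x y) | x y. x \<in> A \<and> y \<in> A}"

text \<open>N_delta(E): minimal cardinality of a cover of E by subsets of the space M of
  diameter at most delta (infinity if no finite such cover exists).\<close>
definition covnum :: "'a set \<Rightarrow> ('a \<Rightarrow> 'a \<Rightarrow> real) \<Rightarrow> real \<Rightarrow> 'a set \<Rightarrow> ereal" where
  "covnum M d \<delta> E = Inf {ereal (real (card \<C>)) | \<C>. finite \<C> \<and> (\<forall>C\<in>\<C>. C \<subseteq> M \<and> mdiam d C \<le> ereal \<delta>) \<and> E \<subseteq> \<Union>\<C>}"

definition box_ratio :: "'a set \<Rightarrow> ('a \<Rightarrow> 'a \<Rightarrow> real) \<Rightarrow> 'a set \<Rightarrow> real \<Rightarrow> ereal" where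
  "box_ratio M d E \<delta> =
     (let N = covnum M d \<delta> E in
      if N = \<infinity> then \<infinity> else ereal (ln (real_of_ereal N) / \<bar>ln \<delta>\<bar>))"

definition lower_box_dim :: "'a set \<Rightarrow> ('a \<Rightarrow> 'a \<Rightarrow> real) \<Rightarrow> 'a set \<Rightarrow> ereal" where
  "lower_box_dim M d E = Liminf (at_right 0) (box_ratio M d E)"

definition upper_box_dim :: "'a set \<Rightarrow> ('a \<Rightarrow> 'a \<Rightarrow> real) \<Rightarrow> 'a set \<Rightarrow> ereal" where
  "upper_box_dim M d E = Limsup (at_right 0) (box_ratio M d E)"

text \<open>Packing dimensions of a nonempty E \<subseteq> M. Box dimensions are only defined for
  nonempty sets, so the supremum ranges over the nonempty pieces E_n.\<close>
definition packing_dim :: "'a set \<Rightarrow> ('a \<Rightarrow> 'a \<Rightarrow> real) \<Rightarrow> 'a set \<Rightarrow> ereal" where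
  "packing_dim M d E = Inf {(SUP n\<in>{n. En n \<noteq> {}}. upper_box_dim M d (En n)) | En :: nat \<Rightarrow> 'a set.
       (\<forall>n. En n \<subseteq> M) \<and> E \<subseteq> (\<Union>n. En n)}"

definition lower_packing_dim :: "'a set \<Rightarrow> ('a \<Rightarrow> 'a \<Rightarrow> real) \<Rightarrow> 'a set \<Rightarrow> ereal" where
  "lower_packing_dim M d E = Inf {(SUP n\<in>{n. En n \<noteq> {}}. lower_box_dim M d (En n)) | En :: nat \<Rightarrow> 'a set.
       (\<forall>n. En n \<subseteq> M) \<and> E \<subseteq> (\<Union>n. En n)}"

definition directed_lower_packing_dim :: "'a set \<Rightarrow> ('a \<Rightarrow> 'a \<Rightarrow> real) \<Rightarrow> 'a set \<Rightarrow> ereal" where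
  "directed_lower_packing_dim M d E = Inf {(SUP n\<in>{n. En n \<noteq> {}}. lower_box_dim M d (En n)) | En :: nat \<Rightarrow> 'a set.
       incseq En \<and> (\<Union>n. En n) = E}"

definition max_metric :: "('a \<Rightarrow> 'a \<Rightarrow> real) \<Rightarrow> ('b \<Rightarrow> 'b \<Rightarrow> real) \<Rightarrow> ('a \<times> 'b) \<Rightarrow> ('a \<times> 'b) \<Rightarrow> real" where
  "max_metric d1 d2 p q = max (d1 (fst p) (fst q)) (d2 (snd p) (snd q))"

end

theory Submission
  imports Defs "HOL-Real_Asymp.Real_Asymp"
begin

(* Everything rests on separated sets. A maximal \<delta>-separated subset of E is a \<delta>-net, so
   N_2\<delta>(E) > u yields more than u points of E pairwise more than \<delta> apart, while n such points
   force N_\<delta>(E) \<ge> n. In the maximum metric, \<delta>-separated points x_i of A \<subseteq> X together with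
   \<delta>-separated points of the fibres E_{x_i} are \<delta>-separated, so N_\<delta>(E) exceeds \<delta>^-(s+t) as soon
   as N_2\<delta>(A) > \<delta>^-s and N_2\<delta>(E_x) > \<delta>^-t for x \<in> A; the factor 2 is absorbed by lowering the
   exponents slightly.
   Given a cover (E_n) of X \<times> Y and x \<in> X, the fibres (E_n)_x cover Y, so one of them has
   dimension > t, i.e. covering numbers above \<delta>^-t for all \<delta> below some 1/(k+1). The countably
   many sets of points x sharing the same (n, k) cover X, so one of them has dimension > s, and
   then E_n has dimension \<ge> s + t. For the upper packing dimension the cover is first made
   increasing by finite unions, which is harmless because the upper box dimension is finitely
   stable. *)

section \<open>Covering numbers\<close>

lemma mdiam_le_ereal_iff: "mdiam d C \<le> ereal \<delta> \<longleftrightarrow> (\<forall>x\<in>C. \<forall>y\<in>C. d x y \<le> \<delta>)"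
  unfolding mdiam_def Sup_le_iff by fastforce

lemma covnum_le_card:
  assumes "finite \<C>" "\<forall>C\<in>\<C>. C \<subseteq> M \<and> mdiam d C \<le> ereal \<delta>" "E \<subseteq> \<Union>\<C>"
  shows "covnum M d \<delta> E \<le> ereal (real (card \<C>))"
  unfolding covnum_def by (rule Inf_lower) (use assms in blast)

lemma covnum_empty [simp]: "covnum M d \<delta> {} = 0"
proof (rule antisym)
  show "covnum M d \<delta> {} \<le> 0"
    using covnum_le_card[of "{}" M d \<delta> "{}"] by (simp add: zero_ereal_def)
  show "0 \<le> covnum M d \<delta> {}"
    unfolding covnum_def by (rule Inf_greatest) auto
qed

lemma covnum_ge_1:
  assumes "E \<noteq> {}"
  shows "1 \<le> covnum M d \<delta> E"
  unfolding covnum_def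
proof (rule Inf_greatest, clarify)
  fix \<C> :: "'a set set" assume "finite \<C>" "E \<subseteq> \<Union>\<C>"
  then have "\<C> \<noteq> {}" "finite \<C>" using assms by auto
  then show "1 \<le> ereal (real (card \<C>))" by (simp add: Suc_leI card_gt_0_iff)
qed

lemma covnum_mono: "E \<subseteq> F \<Longrightarrow> covnum M d \<delta> E \<le> covnum M d \<delta> F"
  unfolding covnum_def by (rule Inf_superset_mono) blast

lemma covnum_lessE:
  assumes "covnum M d \<delta> E < ereal K"
  obtains \<C> where "finite \<C>" "\<forall>C\<in>\<C>. C \<subseteq> M \<and> mdiam d C \<le> ereal \<delta>" "E \<subseteq> \<Union>\<C>"
    "real (card \<C>) < K"
proof -
  obtain z where "z \<in> {ereal (real (card \<C>)) | \<C>. finite \<C> \<and> (\<forall>C\<in>\<C>. C \<subseteq> M \<and> mdiam d C \<le> ereal \<delta>) \<and> E \<subseteq> \<Union>\<C>}"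
    "z < ereal K"
    using assms unfolding covnum_def Inf_less_iff by blast
  then obtain \<C> where "finite \<C>" "\<forall>C\<in>\<C>. C \<subseteq> M \<and> mdiam d C \<le> ereal \<delta>" "E \<subseteq> \<Union>\<C>"
    "ereal (real (card \<C>)) < ereal K"
    by blast
  then show thesis using that by simp
qed

lemma covnum_UN_le:
  assumes "finite J" and small: "\<And>j. j \<in> J \<Longrightarrow> covnum M d \<delta> (E j) < ereal K"
  shows "covnum M d \<delta> (\<Union>j\<in>J. E j) \<le> ereal (real (card J) * K)"
proof -
  define good where "good j \<C> \<longleftrightarrow> finite \<C> \<and> (\<forall>C\<in>\<C>. C \<subseteq> M \<and> mdiam d C \<le> ereal \<delta>) \<and>
    E j \<subseteq> \<Union>\<C> \<and> real (card \<C>) < K" for j \<C>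
  have "\<forall>j\<in>J. \<exists>\<C>. good j \<C>"
  proof
    fix j assume "j \<in> J"
    from small[OF this] obtain \<C> where "finite \<C>" "\<forall>C\<in>\<C>. C \<subseteq> M \<and> mdiam d C \<le> ereal \<delta>"
      "E j \<subseteq> \<Union>\<C>" "real (card \<C>) < K"
      by (rule covnum_lessE)
    then show "\<exists>\<C>. good j \<C>" unfolding good_def by blast
  qed
  from bchoice[OF this] obtain \<C> where "\<forall>j\<in>J. good j (\<C> j)" by (elim exE)
  then have fin: "\<And>j. j \<in> J \<Longrightarrow> finite (\<C> j)"
    and sets: "\<And>j C. j \<in> J \<Longrightarrow> C \<in> \<C> j \<Longrightarrow> C \<subseteq> M \<and> mdiam d C \<le> ereal \<delta>"
    and covers: "\<And>j. j \<in> J \<Longrightarrow> E j \<subseteq> \<Union>(\<C> j)"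
    and few: "\<And>j. j \<in> J \<Longrightarrow> real (card (\<C> j)) < K"
    unfolding good_def by simp_all
  have "finite (\<Union>j\<in>J. \<C> j)" using fin \<open>finite J\<close> by simp
  moreover have "\<forall>C\<in>(\<Union>j\<in>J. \<C> j). C \<subseteq> M \<and> mdiam d C \<le> ereal \<delta>" using sets by blast
  moreover have "(\<Union>j\<in>J. E j) \<subseteq> \<Union>(\<Union>j\<in>J. \<C> j)" using covers by blast
  ultimately have "covnum M d \<delta> (\<Union>j\<in>J. E j) \<le> ereal (real (card (\<Union>j\<in>J. \<C> j)))"
    by (rule covnum_le_card)
  also have "\<dots> \<le> ereal (\<Sum>j\<in>J. real (card (\<C> j)))"
    using card_UN_le[OF \<open>finite J\<close>, of \<C>] by (simp flip: of_nat_sum)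
  also have "\<dots> \<le> ereal (real (card J) * K)"
    using sum_mono[of J "\<lambda>j. real (card (\<C> j))" "\<lambda>_. K"] few by (simp add: less_imp_le)
  finally show ?thesis .
qed

definition separated :: "('a \<Rightarrow> 'a \<Rightarrow> real) \<Rightarrow> real \<Rightarrow> 'a set \<Rightarrow> bool" where
  "separated d \<delta> S \<longleftrightarrow> (\<forall>x\<in>S. \<forall>y\<in>S. x \<noteq> y \<longrightarrow> \<delta> < d x y)"

lemma card_le_covnum_if_separated:
  assumes "S \<subseteq> E" "finite S" "separated d \<delta> S"
  shows "ereal (real (card S)) \<le> covnum M d \<delta> E"
  unfolding covnum_def
proof (rule Inf_greatest, clarify)
  fix \<C> assume \<C>: "finite \<C>" "\<forall>C\<in>\<C>. C \<subseteq> M \<and> mdiam d C \<le> ereal \<delta>" "E \<subseteq> \<Union>\<C>"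
  have "\<forall>s\<in>S. \<exists>C\<in>\<C>. s \<in> C" using assms(1) \<C>(3) by blast
  then obtain f where f: "\<forall>s\<in>S. f s \<in> \<C> \<and> s \<in> f s" by metis
  have "inj_on f S"
  proof (rule inj_onI)
    fix s s' assume "s \<in> S" "s' \<in> S" "f s = f s'"
    then have "mdiam d (f s) \<le> ereal \<delta>" "s \<in> f s" "s' \<in> f s" using f \<C>(2) by metis+
    then have "d s s' \<le> \<delta>" unfolding mdiam_le_ereal_iff by blast
    then show "s = s'" using assms(3) \<open>s \<in> S\<close> \<open>s' \<in> S\<close> unfolding separated_def by (meson not_less)
  qed
  then have "card S \<le> card \<C>" using f \<C>(1) by (intro card_inj_on_le) auto
  then show "ereal (real (card S)) \<le> ereal (real (card \<C>))" by simp
qed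

lemma covnum_double_le_card_if_net:
  assumes "Metric_space M d" "S \<subseteq> M" "finite S" and net: "\<forall>e\<in>E. e \<in> M \<and> (\<exists>s\<in>S. d s e \<le> \<delta>)"
  shows "covnum M d (2 * \<delta>) E \<le> ereal (real (card S))"
proof -
  interpret Metric_space M d by fact
  define \<C> where "\<C> = (\<lambda>s. {z\<in>M. d s z \<le> \<delta>}) ` S"
  have "d x y \<le> 2 * \<delta>" if "s \<in> S" "x \<in> M" "y \<in> M" "d s x \<le> \<delta>" "d s y \<le> \<delta>" for s x y
  proof -
    have "d x y \<le> d x s + d s y" using that assms(2) triangle by blast
    then show ?thesis using that commute[of x s] by linarith
  qed
  then have "\<forall>C\<in>\<C>. C \<subseteq> M \<and> mdiam d C \<le> ereal (2 * \<delta>)"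
    unfolding \<C>_def mdiam_le_ereal_iff by auto
  moreover have "E \<subseteq> \<Union>\<C>" using net unfolding \<C>_def by blast
  ultimately have "covnum M d (2 * \<delta>) E \<le> ereal (real (card \<C>))"
    using \<open>finite S\<close> unfolding \<C>_def by (intro covnum_le_card) simp_all
  also have "\<dots> \<le> ereal (real (card S))" unfolding \<C>_def by (simp add: card_image_le \<open>finite S\<close>)
  finally show ?thesis .
qed

lemma separated_subset_if_less_covnum_double:
  assumes "Metric_space M d" "E \<subseteq> M" "0 < \<delta>" and large: "ereal u < covnum M d (2 * \<delta>) E"
  shows "\<exists>S\<subseteq>E. finite S \<and> separated d \<delta> S \<and> u < real (card S)"
proof (rule ccontr)
  interpret Metric_space M d by fact
  assume "\<not> ?thesis"
  then have small: "real (card S) \<le> u" if "S \<subseteq> E" "finite S" "separated d \<delta> S" for S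
    using that not_less by blast
  define \<S> where "\<S> = {S. S \<subseteq> E \<and> finite S \<and> separated d \<delta> S}"
  have "card ` \<S> \<subseteq> {..nat \<lfloor>u\<rfloor>}"
  proof (rule image_subsetI)
    fix S assume "S \<in> \<S>"
    then show "card S \<in> {..nat \<lfloor>u\<rfloor>}" using small le_nat_floor unfolding \<S>_def by auto
  qed
  then have "finite (card ` \<S>)" by (rule finite_subset) simp
  moreover have "{} \<in> \<S>" unfolding \<S>_def separated_def by simp
  ultimately have "Max (card ` \<S>) \<in> card ` \<S>" by (intro Max_in) auto
  then obtain S where "S \<in> \<S>" and max: "card S = Max (card ` \<S>)" by auto
  then have S: "S \<subseteq> E" "finite S" "separated d \<delta> S" unfolding \<S>_def by auto
  have "\<exists>s\<in>S. d s e \<le> \<delta>" if "e \<in> E" for e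
  proof (rule ccontr)
    assume "\<not> ?thesis"
    then have far: "\<forall>s\<in>S. \<delta> < d s e" by (simp add: not_le)
    have "d e e = 0" using \<open>e \<in> E\<close> \<open>E \<subseteq> M\<close> zero by blast
    then have "e \<notin> S" using far \<open>0 < \<delta>\<close> by force
    have "separated d \<delta> (insert e S)"
      using S(3) far unfolding separated_def by (metis commute insert_iff)
    then have "insert e S \<in> \<S>" unfolding \<S>_def using S \<open>e \<in> E\<close> by simp
    then have "card (insert e S) \<le> card S" unfolding max using \<open>finite (card ` \<S>)\<close> by simp
    then show False using \<open>e \<notin> S\<close> \<open>finite S\<close> by simp
  qed
  then have "covnum M d (2 * \<delta>) E \<le> ereal (real (card S))"
    using S \<open>E \<subseteq> M\<close> by (intro covnum_double_le_card_if_net[OF assms(1)]) auto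
  also have "\<dots> \<le> ereal u" using small[OF S] by simp
  finally show False using large by simp
qed

section \<open>Covering numbers of products\<close>

lemma separated_Sigma:
  assumes "separated dX \<delta> S" "\<And>x. x \<in> S \<Longrightarrow> separated dY \<delta> (T x)"
  shows "separated (max_metric dX dY) \<delta> (Sigma S T)"
  using assms unfolding separated_def max_metric_def by (fastforce simp: less_max_iff_disj)

lemma less_covnum_Times:
  assumes "Metric_space X dX" "Metric_space Y dY" "E \<subseteq> X \<times> Y" "A \<subseteq> X" "0 < \<delta>" "0 \<le> u" "0 \<le> v"
    and base: "ereal u < covnum X dX (2 * \<delta>) A"
    and fibres: "\<And>x. x \<in> A \<Longrightarrow> ereal v < covnum Y dY (2 * \<delta>) {y. (x, y) \<in> E}"
  shows "ereal (u * v) < covnum (X \<times> Y) (max_metric dX dY) \<delta> E"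
proof -
  obtain S where S: "S \<subseteq> A" "finite S" "separated dX \<delta> S" "u < real (card S)"
    using separated_subset_if_less_covnum_double[OF assms(1) \<open>A \<subseteq> X\<close> \<open>0 < \<delta>\<close> base] by blast
  have "\<exists>T. T \<subseteq> {y. (x, y) \<in> E} \<and> finite T \<and> separated dY \<delta> T \<and> v < real (card T)"
    if "x \<in> S" for x
    using \<open>E \<subseteq> X \<times> Y\<close> S(1) that
    by (intro separated_subset_if_less_covnum_double[OF assms(2) _ \<open>0 < \<delta>\<close> fibres]) auto
  then obtain T where T: "\<And>x. x \<in> S \<Longrightarrow>
      T x \<subseteq> {y. (x, y) \<in> E} \<and> finite (T x) \<and> separated dY \<delta> (T x) \<and> v < real (card (T x))"
    by metis
  have "S \<noteq> {}" using S(4) \<open>0 \<le> u\<close> by auto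
  have "u * v \<le> real (card S) * v" using S(4) \<open>0 \<le> v\<close> by (simp add: mult_right_mono)
  also have "\<dots> < (\<Sum>x\<in>S. real (card (T x)))"
    using sum_strict_mono[OF \<open>finite S\<close> \<open>S \<noteq> {}\<close>, of "\<lambda>_. v"] T by simp
  also have "\<dots> = real (card (Sigma S T))"
    using S(2) T by (simp add: card_SigmaI)
  finally have "ereal (u * v) < ereal (real (card (Sigma S T)))" by simp
  also have "\<dots> \<le> covnum (X \<times> Y) (max_metric dX dY) \<delta> E"
    using S T by (intro card_le_covnum_if_separated separated_Sigma) auto
  finally show ?thesis .
qed

lemma powr_less_covnum_Times:
  assumes "Metric_space X dX" "Metric_space Y dY" "E \<subseteq> X \<times> Y" "A \<subseteq> X" "0 < \<delta>"
    and "ereal (\<delta> powr -s) < covnum X dX (2 * \<delta>) A"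
    and "\<And>x. x \<in> A \<Longrightarrow> ereal (\<delta> powr -t) < covnum Y dY (2 * \<delta>) {y. (x, y) \<in> E}"
  shows "ereal (\<delta> powr -(s + t)) < covnum (X \<times> Y) (max_metric dX dY) \<delta> E"
  using less_covnum_Times[OF assms(1-5) _ _ assms(6-7)] \<open>0 < \<delta>\<close>
  by (simp add: powr_add[symmetric])

section \<open>Box dimensions via covering numbers\<close>

lemma eventually_at_right_0_less_1: "\<forall>\<^sub>F \<delta> in at_right 0. 0 < \<delta> \<and> \<delta> < (1::real)"
  unfolding eventually_at_right_field by (intro exI[of _ 1]) simp

lemma le_ln_div_abs_ln_iff:
  fixes \<delta> N c :: real
  assumes "0 < \<delta>" "\<delta> < 1" "0 < N"
  shows "c \<le> ln N / \<bar>ln \<delta>\<bar> \<longleftrightarrow> \<delta> powr -c \<le> N"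
    and "c < ln N / \<bar>ln \<delta>\<bar> \<longleftrightarrow> \<delta> powr -c < N"
proof -
  have pos: "0 < \<bar>ln \<delta>\<bar>" and ln_powr_eq: "ln (\<delta> powr -c) = c * \<bar>ln \<delta>\<bar>"
    using assms(1,2) by (simp_all add: ln_powr)
  have "0 < \<delta> powr -c" using assms(1) by simp
  then show "c \<le> ln N / \<bar>ln \<delta>\<bar> \<longleftrightarrow> \<delta> powr -c \<le> N"
    and "c < ln N / \<bar>ln \<delta>\<bar> \<longleftrightarrow> \<delta> powr -c < N"
    using \<open>0 < N\<close> ln_powr_eq
    by (simp_all add: pos_le_divide_eq[OF pos] pos_less_divide_eq[OF pos] flip: ln_le_cancel_iff ln_less_cancel_iff)
qed

lemma ereal_le_box_ratio_iff:
  assumes "E \<noteq> {}" "0 < \<delta>" "\<delta> < 1"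
  shows "ereal c \<le> box_ratio M d E \<delta> \<longleftrightarrow> ereal (\<delta> powr -c) \<le> covnum M d \<delta> E"
    and "ereal c < box_ratio M d E \<delta> \<longleftrightarrow> ereal (\<delta> powr -c) < covnum M d \<delta> E"
proof -
  have "(ereal c \<le> box_ratio M d E \<delta> \<longleftrightarrow> ereal (\<delta> powr -c) \<le> covnum M d \<delta> E) \<and>
        (ereal c < box_ratio M d E \<delta> \<longleftrightarrow> ereal (\<delta> powr -c) < covnum M d \<delta> E)"
  proof (cases "covnum M d \<delta> E = \<infinity>")
    case True
    then show ?thesis by (simp add: box_ratio_def)
  next
    case False
    with covnum_ge_1[OF assms(1), of M d \<delta>] obtain N where N: "covnum M d \<delta> E = ereal N" "1 \<le> N"
      by (cases "covnum M d \<delta> E") (auto simp: one_ereal_def)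
    then have "box_ratio M d E \<delta> = ereal (ln N / \<bar>ln \<delta>\<bar>)" by (simp add: box_ratio_def)
    with N le_ln_div_abs_ln_iff[OF assms(2,3), of N c] show ?thesis by simp
  qed
  then show "ereal c \<le> box_ratio M d E \<delta> \<longleftrightarrow> ereal (\<delta> powr -c) \<le> covnum M d \<delta> E"
    and "ereal c < box_ratio M d E \<delta> \<longleftrightarrow> ereal (\<delta> powr -c) < covnum M d \<delta> E"
    by blast+
qed

lemma nonempty_if_frequently_powr_le_covnum:
  assumes "\<exists>\<^sub>F \<delta> in at_right 0. ereal (\<delta> powr -t) \<le> covnum M d \<delta> E"
  shows "E \<noteq> {}"
proof -
  have "\<exists>\<^sub>F \<delta> in at_right 0. ereal (\<delta> powr -t) \<le> covnum M d \<delta> E \<and> 0 < \<delta>"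
    using assms eventually_at_right_less by (rule frequently_eventually_frequently)
  then obtain \<delta> :: real where "0 < \<delta>" "ereal (\<delta> powr -t) \<le> covnum M d \<delta> E"
    by (auto dest: frequently_ex)
  then show ?thesis by auto
qed

lemma less_lower_box_dimD:
  assumes "E \<noteq> {}" "ereal t < lower_box_dim M d E"
  shows "\<forall>\<^sub>F \<delta> in at_right 0. ereal (\<delta> powr -t) < covnum M d \<delta> E"
proof -
  have "\<forall>\<^sub>F \<delta> in at_right 0. ereal t < box_ratio M d E \<delta>"
    using assms(2) unfolding lower_box_dim_def by (rule less_LiminfD)
  with eventually_at_right_0_less_1 show ?thesis
    by eventually_elim (simp add: ereal_le_box_ratio_iff(2)[OF assms(1)])
qed

lemma lower_box_dim_geI:
  assumes "\<forall>\<^sub>F \<delta> in at_right 0. ereal (\<delta> powr -t) \<le> covnum M d \<delta> E"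
  shows "ereal t \<le> lower_box_dim M d E"
proof -
  have "E \<noteq> {}"
    using assms by (intro nonempty_if_frequently_powr_le_covnum eventually_frequently) simp_all
  have "\<forall>\<^sub>F \<delta> in at_right 0. ereal t \<le> box_ratio M d E \<delta>"
    using assms eventually_at_right_0_less_1
    by eventually_elim (simp add: ereal_le_box_ratio_iff(1)[OF \<open>E \<noteq> {}\<close>])
  then show ?thesis unfolding lower_box_dim_def by (rule Liminf_bounded)
qed

lemma less_upper_box_dimD:
  assumes "E \<noteq> {}" "ereal t < upper_box_dim M d E"
  shows "\<exists>\<^sub>F \<delta> in at_right 0. ereal (\<delta> powr -t) < covnum M d \<delta> E"
proof -
  have "\<not> (\<forall>\<^sub>F \<delta> in at_right 0. box_ratio M d E \<delta> \<le> ereal t)"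
    using assms(2) Limsup_bounded unfolding upper_box_dim_def by (metis not_le)
  then have "\<exists>\<^sub>F \<delta> in at_right 0. ereal t < box_ratio M d E \<delta>"
    by (simp add: frequently_def not_less)
  moreover have "\<forall>\<^sub>F \<delta> in at_right 0. ereal t < box_ratio M d E \<delta> \<longrightarrow> ereal (\<delta> powr -t) < covnum M d \<delta> E"
    using eventually_at_right_0_less_1
    by eventually_elim (simp add: ereal_le_box_ratio_iff(2)[OF assms(1)])
  ultimately show ?thesis by (rule frequently_rev_mp)
qed

lemma upper_box_dim_geI:
  assumes "\<exists>\<^sub>F \<delta> in at_right 0. ereal (\<delta> powr -t) \<le> covnum M d \<delta> E"
  shows "ereal t \<le> upper_box_dim M d E"
proof (rule ccontr)
  have "E \<noteq> {}" using assms by (rule nonempty_if_frequently_powr_le_covnum)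
  assume "\<not> ?thesis"
  then have "\<forall>\<^sub>F \<delta> in at_right 0. box_ratio M d E \<delta> < ereal t"
    unfolding upper_box_dim_def by (intro Limsup_lessD) simp
  with eventually_at_right_0_less_1
  have "\<forall>\<^sub>F \<delta> in at_right 0. \<not> ereal (\<delta> powr -t) \<le> covnum M d \<delta> E"
    by eventually_elim (metis ereal_le_box_ratio_iff(1)[OF \<open>E \<noteq> {}\<close>] not_le)
  then show False using assms by (simp add: frequently_def)
qed

lemma lower_box_dim_nonneg:
  assumes "E \<noteq> {}"
  shows "0 \<le> lower_box_dim M d E"
proof -
  have "\<forall>\<^sub>F \<delta> in at_right 0. ereal (\<delta> powr -0) \<le> covnum M d \<delta> E"
    using eventually_at_right_less by eventually_elim (simp add: covnum_ge_1[OF assms] flip: one_ereal_def)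
  then show ?thesis using lower_box_dim_geI by (metis zero_ereal_def)
qed

lemma upper_box_dim_nonneg:
  assumes "E \<noteq> {}"
  shows "0 \<le> upper_box_dim M d E"
proof -
  have "lower_box_dim M d E \<le> upper_box_dim M d E"
    unfolding lower_box_dim_def upper_box_dim_def by (simp add: Liminf_le_Limsup)
  with lower_box_dim_nonneg[OF assms, of M d] show ?thesis by (rule order_trans)
qed

lemma eventually_at_right_0_double:
  "eventually P (at_right (0::real)) \<Longrightarrow> \<forall>\<^sub>F \<delta> in at_right 0. P (2 * \<delta>)"
  using filtermap_times_pos_at_right[of 2 "0::real"] by (simp add: eventually_filtermap[symmetric])

lemma frequently_at_right_0_double:
  "frequently P (at_right (0::real)) \<Longrightarrow> \<exists>\<^sub>F \<delta> in at_right 0. P (2 * \<delta>)"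
  using filtermap_times_pos_at_right[of 2 "0::real"] by (simp add: frequently_filtermap[symmetric])

text \<open>Lowering the exponent from \<open>t'\<close> to \<open>t < t'\<close> absorbs the change of scale from \<open>\<delta>\<close> to \<open>2\<delta>\<close>.\<close>
lemma less_lower_box_dim_doubleD:
  assumes "E \<noteq> {}" "ereal t < lower_box_dim M d E"
  shows "\<forall>\<^sub>F \<delta> in at_right 0. ereal (\<delta> powr -t) < covnum M d (2 * \<delta>) E"
proof -
  obtain t' where "t < t'" and t': "ereal t' < lower_box_dim M d E"
    using ereal_dense2[OF assms(2)] by auto
  have "\<forall>\<^sub>F \<delta> in at_right 0. ereal ((2 * \<delta>) powr -t') < covnum M d (2 * \<delta>) E"
    using eventually_at_right_0_double[OF less_lower_box_dimD[OF assms(1) t']] .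
  moreover from \<open>t < t'\<close> have "\<forall>\<^sub>F \<delta> in at_right 0. \<delta> powr -t \<le> (2 * \<delta>) powr -t'"
    by real_asymp
  ultimately show ?thesis by eventually_elim (metis ereal_less_eq(3) le_less_trans)
qed

lemma less_upper_box_dim_doubleD:
  assumes "E \<noteq> {}" "ereal t < upper_box_dim M d E"
  shows "\<exists>\<^sub>F \<delta> in at_right 0. ereal (\<delta> powr -t) < covnum M d (2 * \<delta>) E"
proof -
  obtain t' where "t < t'" and t': "ereal t' < upper_box_dim M d E"
    using ereal_dense2[OF assms(2)] by auto
  have "\<exists>\<^sub>F \<delta> in at_right 0. ereal ((2 * \<delta>) powr -t') < covnum M d (2 * \<delta>) E"
    using frequently_at_right_0_double[OF less_upper_box_dimD[OF assms(1) t']] .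
  moreover from \<open>t < t'\<close> have "\<forall>\<^sub>F \<delta> in at_right 0. \<delta> powr -t \<le> (2 * \<delta>) powr -t'"
    by real_asymp
  then have "\<forall>\<^sub>F \<delta> in at_right 0. ereal ((2 * \<delta>) powr -t') < covnum M d (2 * \<delta>) E \<longrightarrow>
      ereal (\<delta> powr -t) < covnum M d (2 * \<delta>) E"
    by eventually_elim (metis ereal_less_eq(3) le_less_trans)
  ultimately show ?thesis by (rule frequently_rev_mp)
qed

text \<open>Finite stability of the upper box dimension.\<close>
lemma frequently_covnum_UN_D:
  assumes "finite J" "s < s'"
    and "\<exists>\<^sub>F \<delta> in at_right 0. ereal (\<delta> powr -s') < covnum M d \<delta> (\<Union>j\<in>J. E j)"
  shows "\<exists>j\<in>J. \<exists>\<^sub>F \<delta> in at_right 0. ereal (\<delta> powr -s) \<le> covnum M d \<delta> (E j)"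
proof (rule ccontr)
  assume "\<not> ?thesis"
  then have "\<forall>\<^sub>F \<delta> in at_right 0. \<forall>j\<in>J. covnum M d \<delta> (E j) < ereal (\<delta> powr -s)"
    using \<open>finite J\<close> by (simp add: eventually_ball_finite_distrib not_frequently not_le)
  moreover have "\<forall>\<^sub>F \<delta> in at_right 0. real (card J) * \<delta> powr -s \<le> \<delta> powr -s'"
    using \<open>s < s'\<close> by real_asymp
  ultimately have "\<forall>\<^sub>F \<delta> in at_right 0. \<not> ereal (\<delta> powr -s') < covnum M d \<delta> (\<Union>j\<in>J. E j)"
  proof eventually_elim
    case (elim \<delta>)
    then have "covnum M d \<delta> (\<Union>j\<in>J. E j) \<le> ereal (real (card J) * \<delta> powr -s)"
      using covnum_UN_le[OF \<open>finite J\<close>] by blast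
    also have "\<dots> \<le> ereal (\<delta> powr -s')" using elim by simp
    finally show ?case by (simp add: not_less)
  qed
  then show False using assms(3) by (simp add: frequently_def)
qed

section \<open>Packing dimensions\<close>

lemma incseq_partial_unions:
  fixes A :: "nat \<Rightarrow> 'a set"
  shows "incseq (\<lambda>m. \<Union>j\<le>m. A j)" and "(\<Union>m. \<Union>j\<le>m. A j) = (\<Union>n. A n)"
proof -
  show "incseq (\<lambda>m. \<Union>j\<le>m. A j)" by (rule monoI, rule UN_mono) auto
  have "A n \<subseteq> (\<Union>j\<le>n. A j)" for n by (rule UN_upper) simp
  then have "(\<Union>n. A n) \<subseteq> (\<Union>m. \<Union>j\<le>m. A j)" by (rule UN_mono[OF subset_refl])
  then show "(\<Union>m. \<Union>j\<le>m. A j) = (\<Union>n. A n)" by blast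
qed

lemma ereal_add_le_of_reals:
  fixes a b c :: ereal
  assumes "0 \<le> b" "0 \<le> c" and reals: "\<And>s t. ereal s < b \<Longrightarrow> ereal t < c \<Longrightarrow> ereal (s + t) \<le> a"
  shows "b + c \<le> a"
proof (rule ccontr)
  assume "\<not> b + c \<le> a"
  then have "a < b + c" by simp
  show False
  proof (cases a)
    case MInf
    have "ereal (-1) < b" using assms(1) by (rule less_le_trans[rotated]) simp
    moreover have "ereal (-1) < c" using assms(2) by (rule less_le_trans[rotated]) simp
    ultimately show False using reals[of "-1" "-1"] MInf by simp
  next
    case PInf
    then show False using \<open>a < b + c\<close> by simp
  next
    case (real x)
    have "ereal x - c < b"
      using \<open>a < b + c\<close> real assms(1,2) by (cases b; cases c) (auto simp: algebra_simps)
    then obtain s where s: "ereal x - c < ereal s" "ereal s < b" using ereal_dense2 by blast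
    then have "ereal (x - s) < c" using assms(2) by (cases c) auto
    then obtain t where "ereal (x - s) < ereal t" "ereal t < c" using ereal_dense2 by blast
    then show False using reals[of s t] s real by simp
  qed
qed

lemma le_SUP_nonempty_pieces:
  fixes En :: "nat \<Rightarrow> 'a set" and f :: "'a set \<Rightarrow> ereal"
  assumes "En n \<noteq> {}" "a \<le> f (En n)"
  shows "a \<le> (SUP n\<in>{n. En n \<noteq> {}}. f (En n))"
  using assms(2) by (rule order_trans) (use assms(1) in \<open>auto intro: SUP_upper\<close>)

lemma nonneg_SUP_nonempty_pieces:
  fixes En :: "nat \<Rightarrow> 'a set" and f :: "'a set \<Rightarrow> ereal"
  assumes "E \<subseteq> (\<Union>n. En n)" "E \<noteq> {}" "\<And>A. A \<noteq> {} \<Longrightarrow> 0 \<le> f A"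
  shows "0 \<le> (SUP n\<in>{n. En n \<noteq> {}}. f (En n))"
proof -
  obtain n where "En n \<noteq> {}" using assms(1,2) by blast
  then show ?thesis using assms(3) by (intro le_SUP_nonempty_pieces)
qed

lemma packing_dim_nonneg: "M \<noteq> {} \<Longrightarrow> 0 \<le> packing_dim M d M"
  unfolding packing_dim_def
  by (rule Inf_greatest, clarify) (rule nonneg_SUP_nonempty_pieces; blast intro: upper_box_dim_nonneg)

lemma lower_packing_dim_nonneg: "M \<noteq> {} \<Longrightarrow> 0 \<le> lower_packing_dim M d M"
  unfolding lower_packing_dim_def
  by (rule Inf_greatest, clarify) (rule nonneg_SUP_nonempty_pieces; blast intro: lower_box_dim_nonneg)

lemma directed_lower_packing_dim_nonneg: "M \<noteq> {} \<Longrightarrow> 0 \<le> directed_lower_packing_dim M d M"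
  unfolding directed_lower_packing_dim_def
  by (rule Inf_greatest, clarify) (rule nonneg_SUP_nonempty_pieces; blast intro: lower_box_dim_nonneg)

lemma less_packing_dimD:
  fixes En :: "nat \<Rightarrow> 'a set"
  assumes "ereal s < packing_dim M d E" "\<And>n. En n \<subseteq> M" "E \<subseteq> (\<Union>n. En n)"
  shows "\<exists>n. En n \<noteq> {} \<and> ereal s < upper_box_dim M d (En n)"
proof -
  have "packing_dim M d E \<le> (SUP n\<in>{n. En n \<noteq> {}}. upper_box_dim M d (En n))"
    unfolding packing_dim_def using assms(2,3) by (intro Inf_lower) blast
  with assms(1) have "ereal s < (SUP n\<in>{n. En n \<noteq> {}}. upper_box_dim M d (En n))" by (rule less_le_trans)
  then show ?thesis unfolding less_SUP_iff by blast
qed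

lemma less_lower_packing_dimD:
  fixes En :: "nat \<Rightarrow> 'a set"
  assumes "ereal s < lower_packing_dim M d E" "\<And>n. En n \<subseteq> M" "E \<subseteq> (\<Union>n. En n)"
  shows "\<exists>n. En n \<noteq> {} \<and> ereal s < lower_box_dim M d (En n)"
proof -
  have "lower_packing_dim M d E \<le> (SUP n\<in>{n. En n \<noteq> {}}. lower_box_dim M d (En n))"
    unfolding lower_packing_dim_def using assms(2,3) by (intro Inf_lower) blast
  with assms(1) have "ereal s < (SUP n\<in>{n. En n \<noteq> {}}. lower_box_dim M d (En n))" by (rule less_le_trans)
  then show ?thesis unfolding less_SUP_iff by blast
qed

lemma less_directed_lower_packing_dimD:
  fixes En :: "nat \<Rightarrow> 'a set"
  assumes "ereal s < directed_lower_packing_dim M d E" "incseq En" "(\<Union>n. En n) = E"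
  shows "\<exists>n. En n \<noteq> {} \<and> ereal s < lower_box_dim M d (En n)"
proof -
  have "directed_lower_packing_dim M d E \<le> (SUP n\<in>{n. En n \<noteq> {}}. lower_box_dim M d (En n))"
    unfolding directed_lower_packing_dim_def using assms(2,3) by (intro Inf_lower) blast
  with assms(1) have "ereal s < (SUP n\<in>{n. En n \<noteq> {}}. lower_box_dim M d (En n))" by (rule less_le_trans)
  then show ?thesis unfolding less_SUP_iff by blast
qed

section \<open>Fibres with uniformly large covering numbers\<close>

definition large_fibres :: "'b set \<Rightarrow> ('b \<Rightarrow> 'b \<Rightarrow> real) \<Rightarrow> ('a \<times> 'b) set \<Rightarrow> real \<Rightarrow> real \<Rightarrow> 'a set" where
  "large_fibres Y d E t r =
     {x. \<forall>\<delta>. 0 < \<delta> \<and> \<delta> < r \<longrightarrow> ereal (\<delta> powr -t) < covnum Y d (2 * \<delta>) {y. (x, y) \<in> E}}"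

lemma large_fibres_subset:
  assumes "0 < r"
  shows "large_fibres Y d E t r \<subseteq> fst ` E"
proof
  fix x assume x: "x \<in> large_fibres Y d E t r"
  have "0 < r / 2" "r / 2 < r" using assms by simp_all
  with x have "ereal ((r / 2) powr -t) < covnum Y d (2 * (r / 2)) {y. (x, y) \<in> E}"
    unfolding large_fibres_def by blast
  moreover have "0 < ereal ((r / 2) powr -t)" using assms by simp
  ultimately have "{y. (x, y) \<in> E} \<noteq> {}" by (metis covnum_empty order.asym)
  then show "x \<in> fst ` E" by force
qed

lemma large_fibres_mono:
  assumes "E \<subseteq> E'" "r' \<le> r"
  shows "large_fibres Y d E t r \<subseteq> large_fibres Y d E' t r'"
proof
  fix x assume x: "x \<in> large_fibres Y d E t r"
  show "x \<in> large_fibres Y d E' t r'"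
    unfolding large_fibres_def
  proof (intro CollectI allI impI)
    fix \<delta> :: real assume "0 < \<delta> \<and> \<delta> < r'"
    with x \<open>r' \<le> r\<close> have "ereal (\<delta> powr -t) < covnum Y d (2 * \<delta>) {y. (x, y) \<in> E}"
      unfolding large_fibres_def by auto
    also have "\<dots> \<le> covnum Y d (2 * \<delta>) {y. (x, y) \<in> E'}"
      using \<open>E \<subseteq> E'\<close> by (intro covnum_mono) auto
    finally show "ereal (\<delta> powr -t) < covnum Y d (2 * \<delta>) {y. (x, y) \<in> E'}" .
  qed
qed

lemma eventually_large_fibres:
  assumes "0 < r"
  shows "\<forall>\<^sub>F \<delta> in at_right 0. \<forall>x\<in>large_fibres Y d E t r.
           ereal (\<delta> powr -t) < covnum Y d (2 * \<delta>) {y. (x, y) \<in> E}"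
  unfolding eventually_at_right_field large_fibres_def using assms by blast

lemma ex_large_fibres:
  assumes "{y. (x, y) \<in> E} \<noteq> {}" "ereal t < lower_box_dim Y d {y. (x, y) \<in> E}"
  shows "\<exists>k. x \<in> large_fibres Y d E t (1 / Suc k)"
proof -
  obtain r where "0 < r" and r: "\<forall>\<delta>>0. \<delta> < r \<longrightarrow>
      ereal (\<delta> powr -t) < covnum Y d (2 * \<delta>) {y. (x, y) \<in> E}"
    using less_lower_box_dim_doubleD[OF assms] unfolding eventually_at_right_field by blast
  obtain k where "inverse (real (Suc k)) < r" using reals_Archimedean[OF \<open>0 < r\<close>] by blast
  then have "1 / real (Suc k) < r" by (simp add: inverse_eq_divide)
  with r have "x \<in> large_fibres Y d E t (1 / Suc k)"
    unfolding large_fibres_def by (blast intro: less_trans)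
  then show ?thesis ..
qed

lemma eventually_covnum_Times_large_fibres:
  assumes "Metric_space X dX" "Metric_space Y dY" "E \<subseteq> X \<times> Y" "A \<subseteq> X" "0 < r"
    and A: "A \<subseteq> large_fibres Y dY E t r"
  shows "\<forall>\<^sub>F \<delta> in at_right 0. ereal (\<delta> powr -s) < covnum X dX (2 * \<delta>) A \<longrightarrow>
           ereal (\<delta> powr -(s + t)) < covnum (X \<times> Y) (max_metric dX dY) \<delta> E"
  using eventually_large_fibres[OF \<open>0 < r\<close>, of Y dY E t] eventually_at_right_less
proof eventually_elim
  case (elim \<delta>)
  then have "\<And>x. x \<in> A \<Longrightarrow> ereal (\<delta> powr -t) < covnum Y dY (2 * \<delta>) {y. (x, y) \<in> E}"
    using A by blast
  with powr_less_covnum_Times[OF assms(1-4) \<open>0 < \<delta>\<close>] show ?case by blast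
qed

lemma lower_box_dim_Times_ge:
  assumes "Metric_space X dX" "Metric_space Y dY" "E \<subseteq> X \<times> Y" "A \<subseteq> X" "0 < r"
    and "A \<subseteq> large_fibres Y dY E t r"
    and "\<forall>\<^sub>F \<delta> in at_right 0. ereal (\<delta> powr -s) < covnum X dX (2 * \<delta>) A"
  shows "ereal (s + t) \<le> lower_box_dim (X \<times> Y) (max_metric dX dY) E"
proof (rule lower_box_dim_geI)
  show "\<forall>\<^sub>F \<delta> in at_right 0. ereal (\<delta> powr -(s + t)) \<le> covnum (X \<times> Y) (max_metric dX dY) \<delta> E"
    using assms(7) eventually_covnum_Times_large_fibres[OF assms(1-6)]
    by eventually_elim (blast intro: less_imp_le)
qed

lemma frequently_covnum_Times:
  assumes "Metric_space X dX" "Metric_space Y dY" "E \<subseteq> X \<times> Y" "A \<subseteq> X" "0 < r"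
    and "A \<subseteq> large_fibres Y dY E t r"
    and "\<exists>\<^sub>F \<delta> in at_right 0. ereal (\<delta> powr -s) < covnum X dX (2 * \<delta>) A"
  shows "\<exists>\<^sub>F \<delta> in at_right 0. ereal (\<delta> powr -(s + t)) < covnum (X \<times> Y) (max_metric dX dY) \<delta> E"
  using assms(7) eventually_covnum_Times_large_fibres[OF assms(1-6)] by (rule frequently_rev_mp)

lemma large_fibres_cover:
  fixes En :: "nat \<Rightarrow> ('a \<times> 'b) set"
  assumes "\<And>n. En n \<subseteq> X \<times> Y" "X \<times> Y \<subseteq> (\<Union>n. En n)" "ereal t < lower_packing_dim Y dY Y"
  shows "X \<subseteq> (\<Union>n. \<Union>k. large_fibres Y dY (En n) t (1 / Suc k))"
proof
  fix x assume "x \<in> X"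
  then have "\<And>n. {y. (x, y) \<in> En n} \<subseteq> Y" "Y \<subseteq> (\<Union>n. {y. (x, y) \<in> En n})"
    using assms(1,2) by auto
  from less_lower_packing_dimD[OF assms(3) this]
  obtain n where "{y. (x, y) \<in> En n} \<noteq> {}" "ereal t < lower_box_dim Y dY {y. (x, y) \<in> En n}"
    by (elim exE conjE)
  from ex_large_fibres[OF this] obtain k where "x \<in> large_fibres Y dY (En n) t (1 / Suc k)" ..
  then show "x \<in> (\<Union>n. \<Union>k. large_fibres Y dY (En n) t (1 / Suc k))" by blast
qed

lemma large_fibres_incseq_cover:
  fixes En :: "nat \<Rightarrow> ('a \<times> 'b) set"
  assumes "incseq En" "(\<Union>n. En n) = X \<times> Y" "ereal t < directed_lower_packing_dim Y dY Y"
  shows "incseq (\<lambda>m. large_fibres Y dY (En m) t (1 / Suc m))"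
    and "(\<Union>m. large_fibres Y dY (En m) t (1 / Suc m)) = X"
proof -
  have mono: "large_fibres Y dY (En n) t (1 / Suc k) \<subseteq> large_fibres Y dY (En m) t (1 / Suc m)"
    if "n \<le> m" "k \<le> m" for n k m
    using that by (intro large_fibres_mono incseqD[OF \<open>incseq En\<close>]) (simp_all add: frac_le)
  show "incseq (\<lambda>m. large_fibres Y dY (En m) t (1 / Suc m))" by (rule incseq_SucI, rule mono) simp_all
  have "large_fibres Y dY (En m) t (1 / Suc m) \<subseteq> X" for m
  proof -
    have "large_fibres Y dY (En m) t (1 / Suc m) \<subseteq> fst ` En m"
      by (rule large_fibres_subset) simp
    also have "\<dots> \<subseteq> fst ` (X \<times> Y)" using assms(2) by (intro image_mono) blast
    also have "\<dots> \<subseteq> X" by auto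
    finally show ?thesis .
  qed
  moreover have "x \<in> (\<Union>m. large_fibres Y dY (En m) t (1 / Suc m))" if "x \<in> X" for x
  proof -
    have "incseq (\<lambda>n. {y. (x, y) \<in> En n})"
      using \<open>incseq En\<close> unfolding incseq_Suc_iff by blast
    moreover have "(\<Union>n. {y. (x, y) \<in> En n}) = Y"
      using assms(2) \<open>x \<in> X\<close> by (auto simp: set_eq_iff)
    ultimately have "\<exists>n. {y. (x, y) \<in> En n} \<noteq> {} \<and> ereal t < lower_box_dim Y dY {y. (x, y) \<in> En n}"
      by (rule less_directed_lower_packing_dimD[OF assms(3)])
    then
    obtain n where "{y. (x, y) \<in> En n} \<noteq> {}" "ereal t < lower_box_dim Y dY {y. (x, y) \<in> En n}"
      by (elim exE conjE)
    from ex_large_fibres[OF this] obtain k where "x \<in> large_fibres Y dY (En n) t (1 / Suc k)" ..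
    then have "x \<in> large_fibres Y dY (En (max n k)) t (1 / Suc (max n k))"
      using mono[of n "max n k" k] by (meson max.cobounded1 max.cobounded2 subsetD)
    then show ?thesis by blast
  qed
  ultimately show "(\<Union>m. large_fibres Y dY (En m) t (1 / Suc m)) = X" by blast
qed

section \<open>Packing dimensions of products\<close>

lemma lower_packing_dim_Times_ge:
  fixes X :: "'a set" and Y :: "'b set"
  assumes "Metric_space X dX" "Metric_space Y dY" "X \<noteq> {}" "Y \<noteq> {}"
  shows "lower_packing_dim X dX X + lower_packing_dim Y dY Y
           \<le> lower_packing_dim (X \<times> Y) (max_metric dX dY) (X \<times> Y)"
  unfolding lower_packing_dim_def[of "X \<times> Y"]
proof (rule Inf_greatest, clarify)
  fix En :: "nat \<Rightarrow> ('a \<times> 'b) set"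
  assume cover: "\<forall>n. En n \<subseteq> X \<times> Y" "X \<times> Y \<subseteq> (\<Union>n. En n)"
  show "lower_packing_dim X dX X + lower_packing_dim Y dY Y
          \<le> (SUP n\<in>{n. En n \<noteq> {}}. lower_box_dim (X \<times> Y) (max_metric dX dY) (En n))"
  proof (rule ereal_add_le_of_reals[OF lower_packing_dim_nonneg[OF assms(3)] lower_packing_dim_nonneg[OF assms(4)]])
    fix s t
    assume s: "ereal s < lower_packing_dim X dX X" and t: "ereal t < lower_packing_dim Y dY Y"
    have fibres_sub: "large_fibres Y dY (En n) t (1 / Suc k) \<subseteq> fst ` En n" for n k
      by (rule large_fibres_subset) simp
    have "fst ` En n \<subseteq> X" for n using cover(1) by force
    define H where "H m = large_fibres Y dY (En (fst (prod_decode m))) t (1 / Suc (snd (prod_decode m)))" for m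
    have "H m \<subseteq> X" for m unfolding H_def using fibres_sub \<open>\<And>n. fst ` En n \<subseteq> X\<close> by blast
    moreover have "X \<subseteq> (\<Union>m. H m)"
    proof
      fix x assume "x \<in> X"
      then obtain n k where "x \<in> large_fibres Y dY (En n) t (1 / Suc k)"
        using large_fibres_cover[of En X Y, OF _ cover(2) t] cover(1) by blast
      then have "x \<in> H (prod_encode (n, k))" unfolding H_def by simp
      then show "x \<in> (\<Union>m. H m)" by blast
    qed
    ultimately obtain m where Hm: "H m \<noteq> {}" "ereal s < lower_box_dim X dX (H m)"
      using less_lower_packing_dimD[OF s, of H] by blast
    define n where "n = fst (prod_decode m)"
    have "ereal (s + t) \<le> lower_box_dim (X \<times> Y) (max_metric dX dY) (En n)"
      using cover(1) \<open>H m \<subseteq> X\<close> less_lower_box_dim_doubleD[OF Hm]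
      by (intro lower_box_dim_Times_ge[OF assms(1,2)]) (auto simp: H_def n_def)
    moreover have "En n \<noteq> {}" using Hm(1) fibres_sub unfolding H_def n_def by blast
    ultimately show "ereal (s + t) \<le> (SUP n\<in>{n. En n \<noteq> {}}. lower_box_dim (X \<times> Y) (max_metric dX dY) (En n))"
      by (rule le_SUP_nonempty_pieces[rotated])
  qed
qed

lemma directed_lower_packing_dim_Times_ge:
  fixes X :: "'a set" and Y :: "'b set"
  assumes "Metric_space X dX" "Metric_space Y dY" "X \<noteq> {}" "Y \<noteq> {}"
  shows "directed_lower_packing_dim X dX X + directed_lower_packing_dim Y dY Y
           \<le> directed_lower_packing_dim (X \<times> Y) (max_metric dX dY) (X \<times> Y)"
  unfolding directed_lower_packing_dim_def[of "X \<times> Y"]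
proof (rule Inf_greatest, clarify)
  fix En :: "nat \<Rightarrow> ('a \<times> 'b) set"
  assume cover: "incseq En" "(\<Union>n. En n) = X \<times> Y"
  show "directed_lower_packing_dim X dX X + directed_lower_packing_dim Y dY Y
          \<le> (SUP n\<in>{n. En n \<noteq> {}}. lower_box_dim (X \<times> Y) (max_metric dX dY) (En n))"
  proof (rule ereal_add_le_of_reals[OF directed_lower_packing_dim_nonneg[OF assms(3)]
        directed_lower_packing_dim_nonneg[OF assms(4)]])
    fix s t
    assume s: "ereal s < directed_lower_packing_dim X dX X"
      and t: "ereal t < directed_lower_packing_dim Y dY Y"
    define H where "H m = large_fibres Y dY (En m) t (1 / Suc m)" for m
    note H_cover = large_fibres_incseq_cover[OF cover t, folded H_def]
    obtain m where Hm: "H m \<noteq> {}" "ereal s < lower_box_dim X dX (H m)"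
      using less_directed_lower_packing_dimD[OF s H_cover] by blast
    have "H m \<subseteq> X" using H_cover(2) by blast
    have "En m \<subseteq> X \<times> Y" using cover(2) by blast
    have "ereal (s + t) \<le> lower_box_dim (X \<times> Y) (max_metric dX dY) (En m)"
      using \<open>H m \<subseteq> X\<close> less_lower_box_dim_doubleD[OF Hm]
      by (intro lower_box_dim_Times_ge[OF assms(1,2) \<open>En m \<subseteq> X \<times> Y\<close>]) (auto simp: H_def)
    moreover have "En m \<noteq> {}"
      using Hm(1) large_fibres_subset[of "1 / Suc m" Y dY "En m" t] unfolding H_def by auto
    ultimately show "ereal (s + t) \<le> (SUP n\<in>{n. En n \<noteq> {}}. lower_box_dim (X \<times> Y) (max_metric dX dY) (En n))"
      by (rule le_SUP_nonempty_pieces[rotated])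
  qed
qed

lemma packing_dim_Times_ge:
  fixes X :: "'a set" and Y :: "'b set"
  assumes "Metric_space X dX" "Metric_space Y dY" "X \<noteq> {}" "Y \<noteq> {}"
  shows "packing_dim X dX X + directed_lower_packing_dim Y dY Y
           \<le> packing_dim (X \<times> Y) (max_metric dX dY) (X \<times> Y)"
  unfolding packing_dim_def[of "X \<times> Y"]
proof (rule Inf_greatest, clarify)
  fix En :: "nat \<Rightarrow> ('a \<times> 'b) set"
  assume cover: "\<forall>n. En n \<subseteq> X \<times> Y" "X \<times> Y \<subseteq> (\<Union>n. En n)"
  show "packing_dim X dX X + directed_lower_packing_dim Y dY Y
          \<le> (SUP n\<in>{n. En n \<noteq> {}}. upper_box_dim (X \<times> Y) (max_metric dX dY) (En n))"
  proof (rule ereal_add_le_of_reals[OF packing_dim_nonneg[OF assms(3)]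
        directed_lower_packing_dim_nonneg[OF assms(4)]])
    fix s t
    assume s: "ereal s < packing_dim X dX X" and t: "ereal t < directed_lower_packing_dim Y dY Y"
    \<comment> \<open>the margin \<open>s < s'\<close> pays for the \<open>m + 1\<close> pieces of the finite union \<open>F m\<close> below\<close>
    obtain s' where "s < s'" and s': "ereal s' < packing_dim X dX X"
      using ereal_dense2[OF s] by auto
    define F where "F m = (\<Union>j\<le>m. En j)" for m
    have "(\<Union>n. En n) = X \<times> Y" using cover by blast
    then have "incseq F" and "(\<Union>m. F m) = X \<times> Y"
      using incseq_partial_unions[of En] unfolding F_def by simp_all
    then have F_sub: "F m \<subseteq> X \<times> Y" for m by blast
    define H where "H m = large_fibres Y dY (F m) t (1 / Suc m)" for m
    note H_cover = large_fibres_incseq_cover[OF \<open>incseq F\<close> \<open>(\<Union>m. F m) = X \<times> Y\<close> t, folded H_def]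
    have H_sub: "H m \<subseteq> X" for m
      using UN_upper[of m UNIV H] H_cover(2) by simp
    moreover have "X \<subseteq> (\<Union>m. H m)" using H_cover(2) by simp
    ultimately obtain m where Hm: "H m \<noteq> {}" "ereal s' < upper_box_dim X dX (H m)"
      using less_packing_dimD[OF s', of H] by blast
    have "H m \<subseteq> large_fibres Y dY (F m) t (1 / Suc m)" by (simp add: H_def)
    from frequently_covnum_Times[OF assms(1,2) F_sub H_sub _ this less_upper_box_dim_doubleD[OF Hm]]
    have "\<exists>\<^sub>F \<delta> in at_right 0. ereal (\<delta> powr -(s' + t)) < covnum (X \<times> Y) (max_metric dX dY) \<delta> (\<Union>j\<in>{..m}. En j)"
      by (simp add: F_def)
    from frequently_covnum_UN_D[OF finite_atMost _ this, of "s + t"] \<open>s < s'\<close>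
    obtain j where
      j: "\<exists>\<^sub>F \<delta> in at_right 0. ereal (\<delta> powr -(s + t)) \<le> covnum (X \<times> Y) (max_metric dX dY) \<delta> (En j)"
      by auto
    have "En j \<noteq> {}" using j by (rule nonempty_if_frequently_powr_le_covnum)
    moreover have "ereal (s + t) \<le> upper_box_dim (X \<times> Y) (max_metric dX dY) (En j)"
      using j by (rule upper_box_dim_geI)
    ultimately show "ereal (s + t) \<le> (SUP n\<in>{n. En n \<noteq> {}}. upper_box_dim (X \<times> Y) (max_metric dX dY) (En n))"
      by (rule le_SUP_nonempty_pieces)
  qed
qed

theorem corollary4p5:
  fixes X :: "'a set" and dX :: "'a \<Rightarrow> 'a \<Rightarrow> real"
    and Y :: "'b set" and dY :: "'b \<Rightarrow> 'b \<Rightarrow> real"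
  assumes "Metric_space X dX" and "Metric_space Y dY"
    and "X \<noteq> {}" and "Y \<noteq> {}"
  shows "(packing_dim (X \<times> Y) (max_metric dX dY) (X \<times> Y)
           \<ge> packing_dim X dX X + directed_lower_packing_dim Y dY Y)
     \<and> (directed_lower_packing_dim (X \<times> Y) (max_metric dX dY) (X \<times> Y)
           \<ge> directed_lower_packing_dim X dX X + directed_lower_packing_dim Y dY Y)
     \<and> (lower_packing_dim (X \<times> Y) (max_metric dX dY) (X \<times> Y)
           \<ge> lower_packing_dim X dX X + lower_packing_dim Y dY Y)"
  using packing_dim_Times_ge[OF assms] directed_lower_packing_dim_Times_ge[OF assms]
    lower_packing_dim_Times_ge[OF assms]
  by simp

end
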